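(* Let $T\in\mathcal{T}$, let $v_1,v_2\in A_T$ with $N_T(v_1)=\{u_1,u_2,u_5\}$ and $N_T(v_2)=\{u_3,u_4,u_5\}$, and let $T'$ arise from $T$ by contracting all six edges incident with $v_1$ or $v_2$ into a single new vertex $w$. Then $T'\in\mathcal{T}$, $D_{T'}=\{w\}\cup (D_T\setminus (N_T(v_1)\cup N_T(v_2)))$, and $A_{T'}=A_T\setminus\{v_1,v_2\}$.
   Context: Gallai–Edmonds sets: for a graph $G$, $D_G$ is the set of vertices not covered by at least one maximum matching, $A_G=N_G(D_G)\setminus D_G$, $C_G=V(G)\setminus(A_G\cup D_G)$. $\nu$ denotes the matching number, $n(T)$ the number of vertices. $\mathcal{T}$ is the set of all trees $T$ such that every vertex of $A_T$ has degree at most $3$ in $T$ and $\nu(T)=\frac{n(T)-1}{3}$. *)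

theory Defs
  imports Complex_Main
begin

definition graph :: "'a set \<Rightarrow> 'a set set \<Rightarrow> bool" where
  "graph V E \<longleftrightarrow> finite V \<and> (\<forall>e\<in>E. \<exists>u v. e = {u, v} \<and> u \<noteq> v \<and> u \<in> V \<and> v \<in> V)"

definition nbrs :: "'a set set \<Rightarrow> 'a \<Rightarrow> 'a set" where
  "nbrs E v = {u. {u, v} \<in> E}"

definition deg :: "'a set set \<Rightarrow> 'a \<Rightarrow> nat" where
  "deg E v = card (nbrs E v)"

definition connected_graph :: "'a set \<Rightarrow> 'a set set \<Rightarrow> bool" where
  "connected_graph V E \<longleftrightarrow> V \<noteq> {} \<and>
     (\<forall>u\<in>V. \<forall>v\<in>V. (\<lambda>x y. {x, y} \<in> E)\<^sup>*\<^sup>* u v)"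

definition is_cycle :: "'a set set \<Rightarrow> 'a list \<Rightarrow> bool" where
  "is_cycle E xs \<longleftrightarrow> length xs \<ge> 3 \<and> distinct xs \<and>
     (\<forall>i < length xs. {xs ! i, xs ! ((i + 1) mod length xs)} \<in> E)"

definition tree :: "'a set \<Rightarrow> 'a set set \<Rightarrow> bool" where
  "tree V E \<longleftrightarrow> graph V E \<and> connected_graph V E \<and> \<not> (\<exists>xs. is_cycle E xs)"

definition matching :: "'a set set \<Rightarrow> 'a set set \<Rightarrow> bool" where
  "matching E M \<longleftrightarrow> M \<subseteq> E \<and> (\<forall>e1\<in>M. \<forall>e2\<in>M. e1 \<noteq> e2 \<longrightarrow> e1 \<inter> e2 = {})"

definition nu :: "'a set set \<Rightarrow> nat" where
  "nu E = Max {card M | M. matching E M}"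

definition max_matching :: "'a set set \<Rightarrow> 'a set set \<Rightarrow> bool" where
  "max_matching E M \<longleftrightarrow> matching E M \<and> card M = nu E"

definition D_set :: "'a set \<Rightarrow> 'a set set \<Rightarrow> 'a set" where
  "D_set V E = {v \<in> V. \<exists>M. max_matching E M \<and> v \<notin> \<Union>M}"

definition A_set :: "'a set \<Rightarrow> 'a set set \<Rightarrow> 'a set" where
  "A_set V E = (\<Union>v\<in>D_set V E. nbrs E v) - D_set V E"

definition C_set :: "'a set \<Rightarrow> 'a set set \<Rightarrow> 'a set" where
  "C_set V E = V - (A_set V E \<union> D_set V E)"

definition class_T :: "'a set \<Rightarrow> 'a set set \<Rightarrow> bool" where
  "class_T V E \<longleftrightarrow> tree V E \<and> (\<forall>v\<in>A_set V E. deg E v \<le> 3) \<and>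
     real (nu E) = (real (card V) - 1) / 3"

definition contract_V :: "'a set \<Rightarrow> 'a set \<Rightarrow> 'a \<Rightarrow> 'a set" where
  "contract_V V S w = (V - S) \<union> {w}"

definition contract_E :: "'a set \<Rightarrow> 'a set set \<Rightarrow> 'a set \<Rightarrow> 'a \<Rightarrow> 'a set set" where
  "contract_E V E S w = {e \<in> E. e \<inter> S = {}} \<union>
     {{w, x} | x. x \<in> V - S \<and> (\<exists>y\<in>S. {x, y} \<in> E)}"

end

theory Submission
  imports Defs
begin

text \<open>The trees in \<open>\<T>\<close> are exactly the trees with a bipartition \<open>(X, Y)\<close> in which every edge
  joins \<open>X\<close> to \<open>Y\<close> and every vertex of \<open>X\<close> has degree 3, and then \<open>X = A\<^sub>T\<close> and \<open>Y = D\<^sub>T\<close>.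
  Both directions rest on K\<ouml>nig's theorem for forests, which makes \<open>D\<^sub>T\<close> the set of vertices
  lying in no minimum vertex cover. If \<open>\<nu>(T) = (n(T) - 1)/3\<close>, counting edges shows that the
  Gallai--Edmonds set \<open>C\<^sub>T\<close> is empty and that every vertex of \<open>A\<^sub>T\<close> has degree 3 and only
  neighbours in \<open>D\<^sub>T\<close>. Conversely, in such a bipartite tree \<open>X\<close> is the unique minimum vertex
  cover, because a cover missing a set \<open>Z \<subseteq> X\<close> must contain its neighbourhood, which has more than
  \<open>2 |Z|\<close> vertices.

  The closed neighbourhood \<open>S\<close> of \<open>v\<^sub>1, v\<^sub>2\<close> has seven vertices spanning six edges.
  Contracting it loses six vertices and at least six edges while keeping the graph connected;
  hence exactly six edges are lost, the result is a tree, and no vertex outside \<open>S\<close> had two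
  neighbours in \<open>S\<close>. So degrees outside \<open>S\<close> are preserved and the contracted tree again has the
  bipartition, with sides \<open>A\<^sub>T - {v\<^sub>1, v\<^sub>2}\<close> and \<open>{w} \<union> (D\<^sub>T - S)\<close>.\<close>

section \<open>Graphs and forests\<close>

abbreviation adj :: "'a set set \<Rightarrow> 'a \<Rightarrow> 'a \<Rightarrow> bool" where
  "adj E \<equiv> \<lambda>x y. {x, y} \<in> E"

abbreviation cycle_free :: "'a set set \<Rightarrow> bool" where
  "cycle_free E \<equiv> \<not> (\<exists>xs. is_cycle E xs)"

lemma mem_nbrs_iff [simp]: "u \<in> nbrs E v \<longleftrightarrow> {u, v} \<in> E"
  by (simp add: nbrs_def)

lemma graph_edgeD:
  assumes "graph V E" and "{a, b} \<in> E"
  shows "a \<noteq> b" and "a \<in> V" and "b \<in> V"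
  using assms unfolding graph_def by (auto simp: doubleton_eq_iff)

lemma graph_edgeE:
  assumes "graph V E" and "e \<in> E"
  obtains u v where "e = {u, v}" and "u \<noteq> v" and "u \<in> V" and "v \<in> V"
  using assms unfolding graph_def by blast

lemma graph_edge_subset: "graph V E \<Longrightarrow> e \<in> E \<Longrightarrow> e \<subseteq> V"
  by (erule graph_edgeE) auto

lemma graph_edge_eq:
  assumes "graph V E" and "e \<in> E" and "a \<in> e" and "b \<in> e" and "a \<noteq> b"
  shows "e = {a, b}"
  using graph_edgeE[OF assms(1,2)] assms(3-5) by blast

lemma graph_finite_vertices: "graph V E \<Longrightarrow> finite V"
  by (simp add: graph_def)

lemma graph_finite_edges:
  assumes "graph V E"
  shows "finite E"
proof -
  have "E \<subseteq> Pow V"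
    using graph_edgeE[OF assms] by blast
  then show ?thesis
    using graph_finite_vertices[OF assms] finite_subset by blast
qed

lemma graph_edge_card: "graph V E \<Longrightarrow> e \<in> E \<Longrightarrow> card e = 2"
  by (erule graph_edgeE) auto

lemma nbrs_subset_vertices: "graph V E \<Longrightarrow> nbrs E v \<subseteq> V"
  using graph_edgeD by fastforce

lemma finite_nbrs: "graph V E \<Longrightarrow> finite (nbrs E v)"
  using nbrs_subset_vertices graph_finite_vertices finite_subset by metis

lemma graph_subset: "graph V E \<Longrightarrow> F \<subseteq> E \<Longrightarrow> graph V F"
  unfolding graph_def by blast

lemma cycle_free_subset: "cycle_free E \<Longrightarrow> F \<subseteq> E \<Longrightarrow> cycle_free F"
  unfolding is_cycle_def by blast

lemma card_incident_edges:
  assumes "graph V E"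
  shows "card {e \<in> E. x \<in> e} = deg E x"
proof -
  have "{e \<in> E. x \<in> e} = (\<lambda>y. {y, x}) ` nbrs E x"
  proof (intro equalityI subsetI)
    fix e
    assume e: "e \<in> {e \<in> E. x \<in> e}"
    then obtain y where "e = {y, x}"
      by (auto elim!: graph_edgeE[OF assms] simp: insert_commute)
    with e show "e \<in> (\<lambda>y. {y, x}) ` nbrs E x"
      by auto
  qed auto
  moreover have "inj_on (\<lambda>y. {y, x}) (nbrs E x)"
    using graph_edgeD(1)[OF assms] by (auto intro!: inj_onI simp: doubleton_eq_iff)
  ultimately show ?thesis
    by (simp add: card_image deg_def)
qed

lemma sum_deg_eq_sum_card_Int:
  assumes g: "graph V E" and "finite X"
  shows "(\<Sum>x\<in>X. deg E x) = (\<Sum>e\<in>E. card (e \<inter> X))"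
proof -
  have "(\<Sum>x\<in>X. deg E x) = (\<Sum>x\<in>X. \<Sum>e\<in>{e \<in> E. x \<in> e}. 1::nat)"
    using card_incident_edges[OF g] by simp
  also have "\<dots> = (\<Sum>e\<in>E. \<Sum>x\<in>{x \<in> X. x \<in> e}. 1)"
    by (rule sum.swap_restrict[OF assms(2) graph_finite_edges[OF g]])
  also have "\<dots> = (\<Sum>e\<in>E. card (e \<inter> X))"
  proof -
    have "{x \<in> X. x \<in> e} = e \<inter> X" for e
      by blast
    then show ?thesis
      by simp
  qed
  finally show ?thesis .
qed

definition simple_path :: "'a set set \<Rightarrow> 'a list \<Rightarrow> bool" where
  "simple_path E xs \<longleftrightarrow> distinct xs \<and> (\<forall>i. Suc i < length xs \<longrightarrow> {xs ! i, xs ! Suc i} \<in> E)"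

lemma simple_path_Cons:
  assumes "simple_path E xs" and "xs \<noteq> []" and "y \<notin> set xs" and "{y, hd xs} \<in> E"
  shows "simple_path E (y # xs)"
  using assms unfolding simple_path_def
  by (auto simp: nth_Cons hd_conv_nth split: nat.split)

lemma simple_path_closing_edge_cycle:
  assumes "simple_path E xs" and "2 \<le> j" and "j < length xs" and "{xs ! j, xs ! 0} \<in> E"
  shows "is_cycle E (take (Suc j) xs)"
  unfolding is_cycle_def
proof (intro conjI allI impI)
  fix i
  assume "i < length (take (Suc j) xs)"
  then have "i \<le> j"
    by simp
  moreover have "length (take (Suc j) xs) = Suc j"
    using assms(3) by simp
  ultimately show "{take (Suc j) xs ! i, take (Suc j) xs ! ((i + 1) mod length (take (Suc j) xs))} \<in> E"
    using assms unfolding simple_path_def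
    by (cases "i = j") auto
qed (use assms in \<open>auto simp: simple_path_def\<close>)

lemma longest_simple_path:
  assumes g: "graph V E" and ab: "{a, b} \<in> E"
  shows "\<exists>xs. simple_path E xs \<and> set xs \<subseteq> V \<and> 2 \<le> length xs \<and>
    (\<forall>ys. simple_path E ys \<and> set ys \<subseteq> V \<longrightarrow> length ys \<le> length xs)"
proof -
  have ab_path: "simple_path E [a, b] \<and> set [a, b] \<subseteq> V"
    using ab graph_edgeD[OF g ab] by (auto simp: simple_path_def less_Suc_eq)
  moreover have "\<forall>ys. simple_path E ys \<and> set ys \<subseteq> V \<longrightarrow> length ys < Suc (card V)"
  proof (intro allI impI)
    fix ys
    assume ys: "simple_path E ys \<and> set ys \<subseteq> V"
    then have "length ys = card (set ys)"
      by (simp add: simple_path_def distinct_card)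
    also have "\<dots> \<le> card V"
      using ys card_mono[OF graph_finite_vertices[OF g]] by blast
    finally show "length ys < Suc (card V)"
      by simp
  qed
  ultimately have "\<exists>xs. (simple_path E xs \<and> set xs \<subseteq> V) \<and>
      (\<forall>ys. simple_path E ys \<and> set ys \<subseteq> V \<longrightarrow> length ys \<le> length xs)"
    by (rule Lattices_Big.ex_has_greatest_nat)
  then obtain xs where "simple_path E xs \<and> set xs \<subseteq> V"
    and longest: "\<forall>ys. simple_path E ys \<and> set ys \<subseteq> V \<longrightarrow> length ys \<le> length xs"
    by blast
  moreover have "length [a, b] \<le> length xs"
    using longest ab_path by blast
  ultimately show ?thesis
    by auto
qed

text \<open>The first vertex of a longest path is a leaf: its neighbours lie on the path, and any
  neighbour other than the second vertex would close a cycle.\<close>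

lemma cycle_free_has_leaf:
  assumes g: "graph V E" and acyclic: "cycle_free E" and "E \<noteq> {}"
  obtains l p where "nbrs E l = {p}"
proof -
  obtain a b where "{a, b} \<in> E"
    using \<open>E \<noteq> {}\<close> graph_edgeE[OF g] by (metis ex_in_conv)
  then obtain xs where xs: "simple_path E xs" "set xs \<subseteq> V" "2 \<le> length xs"
    and longest: "\<forall>ys. simple_path E ys \<and> set ys \<subseteq> V \<longrightarrow> length ys \<le> length xs"
    using longest_simple_path[OF g] by blast
  have "nbrs E (xs ! 0) = {xs ! 1}"
  proof (intro equalityI subsetI)
    fix y
    assume "y \<in> nbrs E (xs ! 0)"
    then have y: "{y, xs ! 0} \<in> E"
      by simp
    show "y \<in> {xs ! 1}"
    proof (cases "y \<in> set xs")
      case False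
      have "hd xs = xs ! 0"
        using xs(3) by (cases xs) auto
      with xs y False have "simple_path E (y # xs)"
        by (intro simple_path_Cons) auto
      with longest[rule_format, of "y # xs"] False xs(2) graph_edgeD(2)[OF g y] show ?thesis
        by simp
    next
      case True
      then obtain j where j: "j < length xs" "y = xs ! j"
        by (auto simp: in_set_conv_nth)
      have "j \<noteq> 0"
        using graph_edgeD(1)[OF g y] j by (cases j) auto
      moreover have "\<not> 2 \<le> j"
        using simple_path_closing_edge_cycle[OF xs(1) _ j(1)] y j(2) acyclic by blast
      ultimately have "j = 1"
        by simp
      with j show ?thesis
        by simp
    qed
  next
    fix y
    assume "y \<in> {xs ! 1}"
    then show "y \<in> nbrs E (xs ! 0)"
      using xs(1,3) by (auto simp: simple_path_def insert_commute dest: spec[of _ 0])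
  qed
  then show ?thesis
    using that by blast
qed

lemma leaf_edge:
  assumes "graph V E" and "nbrs E l = {p}"
  shows "{l, p} \<in> E" and "l \<noteq> p" and "l \<in> V" and "p \<in> V"
proof -
  show lp: "{l, p} \<in> E"
    using assms(2) by (auto simp: nbrs_def insert_commute)
  show "l \<noteq> p" and "l \<in> V" and "p \<in> V"
    using graph_edgeD[OF assms(1) lp] by auto
qed

lemma edges_avoiding_leaf:
  assumes g: "graph V E" and leaf: "nbrs E l = {p}"
  shows "{e \<in> E. l \<notin> e} = E - {{l, p}}"
proof (intro equalityI subsetI)
  fix e
  assume e: "e \<in> E - {{l, p}}"
  show "e \<in> {e \<in> E. l \<notin> e}"
  proof (rule ccontr)
    assume "e \<notin> {e \<in> E. l \<notin> e}"
    with e g obtain x where x: "e = {l, x}"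
      by (auto elim!: graph_edgeE)
    with e have "x \<in> nbrs E l"
      by (simp add: insert_commute)
    with leaf have "x = p"
      by simp
    with e x show False
      by simp
  qed
qed auto

lemma remove_leaf:
  assumes g: "graph V E" and leaf: "nbrs E l = {p}"
  defines "E' \<equiv> {e \<in> E. l \<notin> e}"
  shows "graph (V - {l}) E'" and "card V = Suc (card (V - {l}))" and "card E = Suc (card E')"
    and "V - {l} \<noteq> {}"
proof -
  show "graph (V - {l}) E'"
    using g unfolding graph_def E'_def by blast
  show "card V = Suc (card (V - {l}))"
    by (rule card_Suc_Diff1[OF graph_finite_vertices[OF g] leaf_edge(3)[OF g leaf], symmetric])
  show "card E = Suc (card E')"
    unfolding E'_def edges_avoiding_leaf[OF g leaf]
    by (rule card_Suc_Diff1[OF graph_finite_edges[OF g] leaf_edge(1)[OF g leaf], symmetric])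
  show "V - {l} \<noteq> {}"
    using leaf_edge[OF g leaf] by blast
qed

lemma walk_avoiding_leaf:
  assumes g: "graph V E" and leaf: "nbrs E l = {p}"
    and walk: "(adj E)\<^sup>*\<^sup>* a y" and "a \<noteq> l"
  shows "(adj {e \<in> E. l \<notin> e})\<^sup>*\<^sup>* a (if y = l then p else y)"
  using walk
proof (induction rule: rtranclp_induct)
  case (step x y)
  consider "y = l" | "x = l" | "x \<noteq> l" "y \<noteq> l"
    by blast
  then show ?case
  proof cases
    case 1
    with step have "x \<in> nbrs E l"
      by simp
    with leaf have "x = p"
      by simp
    with 1 step leaf_edge(2)[OF g leaf] show ?thesis
      by simp
  next
    case 2
    with step have "y \<in> nbrs E l"
      by (simp add: insert_commute)
    with leaf have "y = p"
      by simp
    with 2 step leaf_edge(2)[OF g leaf] show ?thesis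
      by simp
  next
    case 3
    with step show ?thesis
      by (auto intro: rtranclp.rtrancl_into_rtrancl)
  qed
qed (simp add: \<open>a \<noteq> l\<close>)

lemma connected_remove_leaf:
  assumes g: "graph V E" and c: "connected_graph V E" and leaf: "nbrs E l = {p}"
  shows "connected_graph (V - {l}) {e \<in> E. l \<notin> e}"
  unfolding connected_graph_def
proof (intro conjI ballI)
  show "V - {l} \<noteq> {}"
    using remove_leaf(4)[OF g leaf] .
  fix u v
  assume "u \<in> V - {l}" and "v \<in> V - {l}"
  with c walk_avoiding_leaf[OF g leaf, of u v] show "(adj {e \<in> E. l \<notin> e})\<^sup>*\<^sup>* u v"
    unfolding connected_graph_def by auto
qed

lemma card_edges_forest:
  assumes "graph V E" and "cycle_free E" and "V \<noteq> {}"
  shows "card E + 1 \<le> card V"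
  using assms
proof (induction "card V" arbitrary: V E rule: less_induct)
  case less
  show ?case
  proof (cases "E = {}")
    case True
    with less.prems show ?thesis
      by (simp add: Suc_leI card_gt_0_iff graph_finite_vertices)
  next
    case False
    then obtain l p where leaf: "nbrs E l = {p}"
      using cycle_free_has_leaf[OF less.prems(1,2)] by blast
    note smaller = remove_leaf[OF less.prems(1) leaf]
    have "card {e \<in> E. l \<notin> e} + 1 \<le> card (V - {l})"
      using less.hyps[OF _ smaller(1) _ smaller(4)] smaller(2) cycle_free_subset[OF less.prems(2)]
      by simp
    with smaller show ?thesis
      by simp
  qed
qed

lemma card_connected_edgeless:
  assumes c: "connected_graph V {}"
  shows "card V = 1"
proof -
  have no_walk: "a = b" if "(adj {})\<^sup>*\<^sup>* a b" for a b
    using that by (induction rule: rtranclp_induct) auto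
  from c obtain a where "a \<in> V"
    unfolding connected_graph_def by blast
  have "V = {a}"
  proof (intro equalityI subsetI)
    fix b
    assume "b \<in> V"
    with c \<open>a \<in> V\<close> have "(adj {})\<^sup>*\<^sup>* a b"
      unfolding connected_graph_def by blast
    then have "a = b"
      by (rule no_walk)
    then show "b \<in> {a}"
      by simp
  qed (simp add: \<open>a \<in> V\<close>)
  then show ?thesis
    by simp
qed

lemma card_edges_tree:
  assumes "tree V E"
  shows "card E + 1 = card V"
  using assms
proof (induction "card V" arbitrary: V E rule: less_induct)
  case less
  have g: "graph V E" and c: "connected_graph V E" and acyclic: "cycle_free E"
    using less.prems unfolding tree_def by auto
  show ?case
  proof (cases "E = {}")
    case True
    with c have "card V = 1"
      using card_connected_edgeless by simp
    with True show ?thesis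
      by simp
  next
    case False
    then obtain l p where leaf: "nbrs E l = {p}"
      using cycle_free_has_leaf[OF g acyclic] by blast
    note smaller = remove_leaf[OF g leaf]
    have "cycle_free {e \<in> E. l \<notin> e}"
      by (rule cycle_free_subset[OF acyclic]) auto
    then have "tree (V - {l}) {e \<in> E. l \<notin> e}"
      unfolding tree_def using smaller(1) connected_remove_leaf[OF g c leaf] by simp
    then have "card {e \<in> E. l \<notin> e} + 1 = card (V - {l})"
      using less.hyps smaller(2) by auto
    with smaller show ?thesis
      by simp
  qed
qed

lemma symp_adj: "symp (adj E)"
  by (auto intro: sympI simp: insert_commute)

lemma rtranclp_adj_map:
  assumes "(adj E)\<^sup>*\<^sup>* x y" and "\<And>a b. {a, b} \<in> E \<Longrightarrow> (adj F)\<^sup>*\<^sup>* (f a) (f b)"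
  shows "(adj F)\<^sup>*\<^sup>* (f x) (f y)"
  using assms(1)
proof induction
  case (step y z)
  show ?case
    by (rule rtranclp_trans[OF step.IH assms(2)[OF step.hyps(2)]])
qed simp

lemma cycle_first_edge:
  assumes "is_cycle E xs"
  shows "{xs ! 0, xs ! 1} \<in> E"
proof -
  have "3 \<le> length xs" and "\<forall>i < length xs. {xs ! i, xs ! ((i + 1) mod length xs)} \<in> E"
    using assms unfolding is_cycle_def by auto
  then show ?thesis
    by (auto dest: spec[of _ 0])
qed

lemma cycle_edge_neq_first:
  assumes "is_cycle E xs" and i: "1 \<le> i" "i < length xs"
  shows "{xs ! i, xs ! ((i + 1) mod length xs)} \<noteq> {xs ! 0, xs ! 1}"
proof -
  have k: "3 \<le> length xs" and d: "distinct xs"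
    using assms(1) unfolding is_cycle_def by auto
  have "xs ! i \<noteq> xs ! 0"
    using i k d by (subst nth_eq_iff_index_eq) auto
  moreover have "xs ! ((i + 1) mod length xs) \<noteq> xs ! 0" if "xs ! i = xs ! 1"
  proof -
    have "i = 1"
      using that i k d by (simp add: nth_eq_iff_index_eq)
    moreover have "2 mod length xs = 2"
      using k by simp
    ultimately show ?thesis
      using k d by (subst nth_eq_iff_index_eq) auto
  qed
  ultimately show ?thesis
    by (auto simp: doubleton_eq_iff)
qed

lemma cycle_walk_around:
  assumes "is_cycle E xs"
  shows "(adj (E - {{xs ! 0, xs ! 1}}))\<^sup>*\<^sup>* (xs ! 1) (xs ! 0)"
proof -
  let ?k = "length xs" and ?F = "E - {{xs ! 0, xs ! 1}}"
  have k: "3 \<le> ?k" and edge: "\<And>i. i < ?k \<Longrightarrow> {xs ! i, xs ! ((i + 1) mod ?k)} \<in> E"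
    using assms unfolding is_cycle_def by auto
  have edge_step: "adj ?F (xs ! i) (xs ! ((i + 1) mod ?k))" if "1 \<le> i" "i < ?k" for i
    using edge[OF that(2)] cycle_edge_neq_first[OF assms that] by simp
  have "j < ?k \<longrightarrow> (adj ?F)\<^sup>*\<^sup>* (xs ! 1) (xs ! j)" if "1 \<le> j" for j
    using that
  proof (induction j rule: dec_induct)
    case (step n)
    then show ?case
      using edge_step[of n] by (auto intro: rtranclp.rtrancl_into_rtrancl)
  qed simp
  then have "(adj ?F)\<^sup>*\<^sup>* (xs ! 1) (xs ! (?k - 1))"
    using k by simp
  moreover have "adj ?F (xs ! (?k - 1)) (xs ! 0)"
  proof -
    have "Suc (?k - 1) = ?k"
      using k by simp
    then show ?thesis
      using edge_step[of "?k - 1"] k by simp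
  qed
  ultimately show ?thesis
    by (rule rtranclp.rtrancl_into_rtrancl)
qed

lemma connected_remove_cycle_edge:
  assumes c: "connected_graph V E" and cyc: "is_cycle E xs"
  shows "connected_graph V (E - {{xs ! 0, xs ! 1}})"
proof -
  let ?F = "E - {{xs ! 0, xs ! 1}}"
  have walk_back: "(adj ?F)\<^sup>*\<^sup>* (xs ! 1) (xs ! 0)"
    by (rule cycle_walk_around[OF cyc])
  have walk_forth: "(adj ?F)\<^sup>*\<^sup>* (xs ! 0) (xs ! 1)"
    by (rule sympD[OF symp_rtranclp[OF symp_adj] walk_back])
  have "(adj ?F)\<^sup>*\<^sup>* a b" if "{a, b} \<in> E" for a b
  proof (cases "{a, b} = {xs ! 0, xs ! 1}")
    case True
    then show ?thesis
      using walk_back walk_forth by (auto simp: doubleton_eq_iff)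
  qed (use that in auto)
  then have "(adj ?F)\<^sup>*\<^sup>* u v" if "(adj E)\<^sup>*\<^sup>* u v" for u v
    using rtranclp_adj_map[of E u v ?F "\<lambda>x. x"] that by simp
  with c show ?thesis
    unfolding connected_graph_def by blast
qed

lemma card_vertices_connected:
  assumes "graph V E" and "connected_graph V E"
  shows "card V \<le> card E + 1"
  using assms
proof (induction "card E" arbitrary: E rule: less_induct)
  case less
  show ?case
  proof (cases "cycle_free E")
    case True
    with less.prems have "tree V E"
      by (simp add: tree_def)
    then show ?thesis
      using card_edges_tree[of V E] by simp
  next
    case False
    then obtain xs where cyc: "is_cycle E xs"
      by blast
    let ?F = "E - {{xs ! 0, xs ! 1}}"
    have "card E = Suc (card ?F)"
      by (rule card_Suc_Diff1[OF graph_finite_edges[OF less.prems(1)] cycle_first_edge[OF cyc], symmetric])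
    moreover have "graph V ?F"
      by (rule graph_subset[OF less.prems(1)]) auto
    then have "card V \<le> card ?F + 1"
      using less.hyps[of ?F] connected_remove_cycle_edge[OF less.prems(2) cyc] calculation
      by simp
    ultimately show ?thesis
      by simp
  qed
qed

lemma connected_cycle_free_if_card:
  assumes g: "graph V E" and c: "connected_graph V E" and "card E + 1 \<le> card V"
  shows "cycle_free E"
proof
  assume "\<exists>xs. is_cycle E xs"
  then obtain xs where cyc: "is_cycle E xs"
    by blast
  let ?F = "E - {{xs ! 0, xs ! 1}}"
  have "card V \<le> card ?F + 1"
    using card_vertices_connected[OF graph_subset[OF g] connected_remove_cycle_edge[OF c cyc]] by blast
  moreover have "card E = Suc (card ?F)"
    by (rule card_Suc_Diff1[OF graph_finite_edges[OF g] cycle_first_edge[OF cyc], symmetric])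
  ultimately show False
    using assms(3) by simp
qed

section \<open>Matchings and vertex covers\<close>

definition vertex_cover :: "'a set set \<Rightarrow> 'a set \<Rightarrow> bool" where
  "vertex_cover E K \<longleftrightarrow> (\<forall>e\<in>E. e \<inter> K \<noteq> {})"

definition minimum_cover :: "'a set set \<Rightarrow> 'a set \<Rightarrow> bool" where
  "minimum_cover E K \<longleftrightarrow> vertex_cover E K \<and> finite K \<and> card K = nu E"

lemma minimum_cover_meets_edge: "minimum_cover E K \<Longrightarrow> e \<in> E \<Longrightarrow> e \<inter> K \<noteq> {}"
  by (simp add: minimum_cover_def vertex_cover_def)

lemma finite_matching: "finite E \<Longrightarrow> matching E M \<Longrightarrow> finite M"
  unfolding matching_def using finite_subset by blast

lemma finite_card_matchings: "finite E \<Longrightarrow> finite {card M | M. matching E M}"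
  by (rule finite_image_set, rule finite_subset[of _ "Pow E"]) (auto simp: matching_def)

lemma card_matching_le_nu: "finite E \<Longrightarrow> matching E M \<Longrightarrow> card M \<le> nu E"
  unfolding nu_def using finite_card_matchings by (intro Max_ge) auto

lemma max_matching_exists:
  assumes "finite E"
  obtains M where "max_matching E M"
proof -
  have "matching E {}"
    by (simp add: matching_def)
  then have "nu E \<in> {card M | M. matching E M}"
    unfolding nu_def using finite_card_matchings[OF assms] by (intro Max_in) auto
  then show ?thesis
    using that by (auto simp: max_matching_def)
qed

text \<open>Each matching edge contains its own vertex of the cover.\<close>

lemma card_matching_le_cover:
  assumes m: "matching E M" and c: "vertex_cover E K" and "finite K"
  shows "card M \<le> card (K \<inter> \<Union>M)"
proof -
  have "\<forall>e\<in>M. \<exists>x. x \<in> e \<inter> K"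
  proof
    fix e
    assume "e \<in> M"
    with m have "e \<in> E"
      by (auto simp: matching_def)
    with c show "\<exists>x. x \<in> e \<inter> K"
      unfolding vertex_cover_def by blast
  qed
  then obtain f where f: "\<forall>e\<in>M. f e \<in> e \<inter> K"
    using bchoice[of M "\<lambda>e x. x \<in> e \<inter> K"] by blast
  have "inj_on f M"
  proof (rule inj_onI)
    fix e e'
    assume "e \<in> M" and "e' \<in> M" and "f e = f e'"
    moreover have "f e \<in> e" and "f e' \<in> e'"
      using f \<open>e \<in> M\<close> \<open>e' \<in> M\<close> by blast+
    ultimately have "f e \<in> e \<inter> e'"
      by simp
    with m \<open>e \<in> M\<close> \<open>e' \<in> M\<close> show "e = e'"
      unfolding matching_def by blast
  qed
  moreover have "f ` M \<subseteq> K \<inter> \<Union>M"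
    using f by blast
  ultimately show ?thesis
    by (rule card_inj_on_le) (simp add: \<open>finite K\<close>)
qed

lemma nu_le_card_cover:
  assumes "finite E" and "vertex_cover E K" and "finite K"
  shows "nu E \<le> card K"
proof -
  obtain M where "max_matching E M"
    using max_matching_exists[OF assms(1)] .
  then have "nu E \<le> card (K \<inter> \<Union>M)"
    using card_matching_le_cover assms(2,3) by (fastforce simp: max_matching_def)
  also have "\<dots> \<le> card K"
    using assms(3) by (simp add: card_mono)
  finally show ?thesis .
qed

lemma minimum_cover_subset_matched:
  assumes "finite E" and m: "max_matching E M" and K: "minimum_cover E K"
  shows "K \<subseteq> \<Union>M"
proof
  fix x
  assume "x \<in> K"
  show "x \<in> \<Union>M"
  proof (rule ccontr)
    assume "x \<notin> \<Union>M"
    have "nu E \<le> card (K \<inter> \<Union>M)"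
      using m K card_matching_le_cover by (fastforce simp: max_matching_def minimum_cover_def)
    also have "\<dots> \<le> card (K - {x})"
      using \<open>x \<notin> \<Union>M\<close> K by (intro card_mono) (auto simp: minimum_cover_def)
    also have "\<dots> < card K"
      using \<open>x \<in> K\<close> K by (intro card_Diff1_less) (auto simp: minimum_cover_def)
    finally show False
      using K by (simp add: minimum_cover_def)
  qed
qed

lemma minimum_cover_insert:
  assumes fin: "finite E" and K: "minimum_cover {e \<in> E. x \<notin> e} K"
    and less: "nu {e \<in> E. x \<notin> e} < nu E"
  shows "minimum_cover E (insert x K)"
proof -
  have cover: "vertex_cover E (insert x K)" and "finite (insert x K)"
    using K by (auto simp: vertex_cover_def minimum_cover_def)
  moreover have "card (insert x K) \<le> nu E"
    using K less card_insert_le_m1 by (auto simp: minimum_cover_def card_insert_if)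
  ultimately show ?thesis
    using nu_le_card_cover[OF fin] by (simp add: minimum_cover_def le_antisym)
qed

lemma nu_less_at_leaf:
  assumes g: "graph V E" and leaf: "nbrs E l = {p}"
  shows "nu {e \<in> E. p \<notin> e} < nu E"
proof -
  let ?E = "{e \<in> E. p \<notin> e}"
  have fin: "finite E"
    using graph_finite_edges[OF g] .
  obtain M where M: "max_matching ?E M"
    using max_matching_exists[of ?E] fin by auto
  have disjoint: "e \<inter> {l, p} = {}" if "e \<in> M" for e
  proof -
    have "e \<in> ?E"
      using M that by (auto simp: max_matching_def matching_def)
    with edges_avoiding_leaf[OF g leaf] show ?thesis
      by auto
  qed
  then have "matching E (insert {l, p} M)"
    using M leaf_edge(1)[OF g leaf] by (auto simp: max_matching_def matching_def)
  moreover have "{l, p} \<notin> M"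
    using disjoint by blast
  ultimately show ?thesis
    using card_matching_le_nu[OF fin] M finite_matching[of ?E M] fin
    by (fastforce simp: max_matching_def)
qed

lemma konig_forest:
  assumes "graph V E" and "cycle_free E"
  shows "\<exists>K \<subseteq> V. minimum_cover E K"
  using assms
proof (induction "card E" arbitrary: E rule: less_induct)
  case less
  show ?case
  proof (cases "E = {}")
    case True
    then show ?thesis
      by (intro exI[of _ "{}"]) (simp add: minimum_cover_def vertex_cover_def nu_def matching_def)
  next
    case False
    then obtain l p where leaf: "nbrs E l = {p}"
      using cycle_free_has_leaf[OF less.prems] by blast
    let ?E = "{e \<in> E. p \<notin> e}"
    have "card ?E < card E"
      using graph_finite_edges[OF less.prems(1)] leaf_edge(1)[OF less.prems(1) leaf]
      by (intro psubset_card_mono) auto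
    moreover have "graph V ?E"
      by (rule graph_subset[OF less.prems(1)]) auto
    moreover have "cycle_free ?E"
      by (rule cycle_free_subset[OF less.prems(2)]) auto
    ultimately obtain K where "K \<subseteq> V" and K: "minimum_cover ?E K"
      using less.hyps by blast
    have "minimum_cover E (insert p K)"
      by (rule minimum_cover_insert[OF graph_finite_edges[OF less.prems(1)] K
            nu_less_at_leaf[OF less.prems(1) leaf]])
    then show ?thesis
      using \<open>K \<subseteq> V\<close> leaf_edge(4)[OF less.prems(1) leaf] by blast
  qed
qed

section \<open>Gallai--Edmonds sets of forests\<close>

locale forest =
  fixes V :: "'a set" and E :: "'a set set"
  assumes graph: "graph V E" and cycle_free: "cycle_free E"
begin

abbreviation A where "A \<equiv> A_set V E"
abbreviation D where "D \<equiv> D_set V E"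
abbreviation C where "C \<equiv> C_set V E"

lemma finite_edges: "finite E"
  using graph_finite_edges[OF graph] .

lemma finite_vertices: "finite V"
  using graph_finite_vertices[OF graph] .

lemma D_iff:
  "v \<in> D \<longleftrightarrow> v \<in> V \<and> (\<forall>K. minimum_cover E K \<longrightarrow> v \<notin> K)"
proof
  assume "v \<in> D"
  then obtain M where "max_matching E M" "v \<notin> \<Union>M" "v \<in> V"
    unfolding D_set_def by blast
  then show "v \<in> V \<and> (\<forall>K. minimum_cover E K \<longrightarrow> v \<notin> K)"
    using minimum_cover_subset_matched[OF finite_edges] by blast
next
  assume v: "v \<in> V \<and> (\<forall>K. minimum_cover E K \<longrightarrow> v \<notin> K)"
  let ?E = "{e \<in> E. v \<notin> e}"
  obtain M where M: "max_matching ?E M"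
    using max_matching_exists[of ?E] finite_edges by auto
  then have "matching E M" and unmatched: "v \<notin> \<Union>M"
    by (auto simp: max_matching_def matching_def)
  then have le: "nu ?E \<le> nu E"
    using card_matching_le_nu[OF finite_edges \<open>matching E M\<close>] M by (simp add: max_matching_def)
  show "v \<in> D"
  proof (cases "nu ?E = nu E")
    case True
    then show ?thesis
      using \<open>matching E M\<close> unmatched M v by (auto simp: D_set_def max_matching_def)
  next
    case False
    have "graph V ?E"
      by (rule graph_subset[OF graph]) auto
    moreover have "cycle_free ?E"
      by (rule cycle_free_subset[OF cycle_free]) auto
    ultimately obtain K where "minimum_cover ?E K"
      using konig_forest by blast
    moreover have "nu ?E < nu E"
      using False le by simp
    ultimately have "minimum_cover E (insert v K)"
      by (rule minimum_cover_insert[OF finite_edges])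
    with v show ?thesis
      by blast
  qed
qed

lemma minimum_cover_exists: obtains K where "minimum_cover E K" and "K \<subseteq> V"
  using konig_forest[OF graph cycle_free] by blast

lemma D_independent:
  assumes "{d, d'} \<in> E" and "d \<in> D"
  shows "d' \<notin> D"
proof
  assume "d' \<in> D"
  obtain K where K: "minimum_cover E K"
    using minimum_cover_exists by blast
  then have "{d, d'} \<inter> K \<noteq> {}"
    using assms(1) by (rule minimum_cover_meets_edge)
  with K \<open>d' \<in> D\<close> assms(2) show False
    using D_iff by blast
qed

lemma nbr_of_D_in_A:
  assumes "{a, d} \<in> E" and "d \<in> D"
  shows "a \<in> A"
proof -
  have "a \<notin> D"
    using D_independent[of d a] assms by (simp add: insert_commute)
  with assms show ?thesis
    unfolding A_set_def by auto
qed

lemma A_subset_minimum_cover: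
  assumes K: "minimum_cover E K"
  shows "A \<subseteq> K"
proof
  fix a
  assume "a \<in> A"
  then obtain d where "d \<in> D" and "{a, d} \<in> E"
    unfolding A_set_def by auto
  moreover from this K have "d \<notin> K"
    using D_iff by blast
  ultimately show "a \<in> K"
    using minimum_cover_meets_edge[OF K] by blast
qed

lemma A_subset_V: "A \<subseteq> V"
  unfolding A_set_def using nbrs_subset_vertices[OF graph] by blast

lemma finite_A: "finite A"
  using A_subset_V finite_vertices finite_subset by blast

lemma A_D_disjoint: "A \<inter> D = {}"
  unfolding A_set_def by blast

lemma vertices_partition: "V = A \<union> C \<union> D" "A \<inter> C = {}" "C \<inter> D = {}"
  using A_subset_V unfolding C_set_def D_set_def by auto

lemma edge_avoiding_A_within_C:
  assumes "e \<in> E" and "e \<inter> A = {}"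
  shows "e \<subseteq> C"
proof -
  obtain u v where e: "e = {u, v}" "u \<in> V" "v \<in> V"
    using graph_edgeE[OF graph assms(1)] by metis
  have "u \<notin> D" and "v \<notin> D"
    using nbr_of_D_in_A[of u v] nbr_of_D_in_A[of v u] assms e by (auto simp: insert_commute)
  with e assms(2) show ?thesis
    unfolding C_set_def by blast
qed

definition C_edges :: "'a set set" where
  "C_edges = {e \<in> E. e \<subseteq> C}"

lemma C_edges_forest: "graph C C_edges" "cycle_free C_edges"
proof -
  show "graph C C_edges"
    unfolding graph_def
  proof (intro conjI ballI)
    show "finite C"
      using finite_vertices unfolding C_set_def by simp
    fix e
    assume "e \<in> C_edges"
    then have "e \<in> E" and "e \<subseteq> C"
      by (auto simp: C_edges_def)
    then show "\<exists>u v. e = {u, v} \<and> u \<noteq> v \<and> u \<in> C \<and> v \<in> C"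
      by (auto elim!: graph_edgeE[OF graph])
  qed
  show "cycle_free C_edges"
    by (rule cycle_free_subset[OF cycle_free]) (auto simp: C_edges_def)
qed

lemma finite_C_edges: "finite C_edges"
  using graph_finite_edges[OF C_edges_forest(1)] .

lemma nu_le_card_A_plus_nu_C_edges: "nu E \<le> card A + nu C_edges"
proof -
  have "\<exists>K \<subseteq> C. minimum_cover C_edges K"
    by (rule konig_forest[OF C_edges_forest])
  then obtain K where K: "K \<subseteq> C" "minimum_cover C_edges K"
    by blast
  have "vertex_cover E (A \<union> K)"
    using K edge_avoiding_A_within_C
    by (fastforce simp: vertex_cover_def minimum_cover_def C_edges_def)
  then have "nu E \<le> card (A \<union> K)"
    using K(2) finite_A by (intro nu_le_card_cover[OF finite_edges]) (auto simp: minimum_cover_def)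
  also have "\<dots> \<le> card A + card K"
    by (rule card_Un_le)
  finally show ?thesis
    using K(2) by (simp add: minimum_cover_def)
qed

lemma minimum_cover_restrict:
  assumes K: "minimum_cover E K"
  shows "minimum_cover C_edges (K \<inter> C)" and "card K = card A + card (K \<inter> C)"
proof -
  have fin: "finite (K \<inter> C)"
    using K by (simp add: minimum_cover_def)
  have cover: "vertex_cover C_edges (K \<inter> C)"
    using K by (auto simp: minimum_cover_def vertex_cover_def C_edges_def)
  have "card A + card (K \<inter> C) = card (A \<union> (K \<inter> C))"
    using vertices_partition(2) finite_A fin by (intro card_Un_disjoint[symmetric]) auto
  also have "\<dots> \<le> card K"
    using A_subset_minimum_cover[OF K] K by (intro card_mono) (auto simp: minimum_cover_def)
  finally have le: "card A + card (K \<inter> C) \<le> card K" .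
  then have "card (K \<inter> C) \<le> nu C_edges"
    using K nu_le_card_A_plus_nu_C_edges by (simp add: minimum_cover_def)
  moreover have ge: "nu C_edges \<le> card (K \<inter> C)"
    by (rule nu_le_card_cover[OF finite_C_edges cover fin])
  ultimately show "minimum_cover C_edges (K \<inter> C)"
    using cover fin by (simp add: minimum_cover_def)
  show "card K = card A + card (K \<inter> C)"
    using le ge K nu_le_card_A_plus_nu_C_edges by (simp add: minimum_cover_def)
qed

text \<open>Every vertex of \<open>C\<close> lies in a minimum cover of \<open>E\<close>, hence in a minimum cover of
  \<open>C_edges\<close>, hence is matched by every maximum matching of \<open>C_edges\<close>.\<close>

lemma card_C: "card C = 2 * nu C_edges"
proof -
  obtain M where M: "max_matching C_edges M"
    using max_matching_exists[OF finite_C_edges] .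
  have "C \<subseteq> \<Union>M"
  proof
    fix c
    assume c: "c \<in> C"
    then obtain K where K: "minimum_cover E K" "c \<in> K"
      using D_iff unfolding C_set_def by blast
    then show "c \<in> \<Union>M"
      using minimum_cover_subset_matched[OF finite_C_edges M minimum_cover_restrict(1)[OF K(1)]] c
      by blast
  qed
  moreover have "\<Union>M \<subseteq> C"
    using M by (auto simp: max_matching_def matching_def C_edges_def)
  ultimately have "C = \<Union>M"
    by blast
  moreover have "card (\<Union>M) = 2 * card M"
  proof -
    have "card (\<Union>M) = (\<Sum>e\<in>M. card e)"
      using M finite_vertices \<open>\<Union>M \<subseteq> C\<close>
      by (intro card_Union_disjoint)
        (auto simp: max_matching_def matching_def pairwise_def disjnt_def C_set_def
          intro: finite_subset)
    also have "\<dots> = (\<Sum>e\<in>M. 2)"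
      using M graph_edge_card[OF C_edges_forest(1)] by (intro sum.cong) (auto simp: max_matching_def matching_def)
    finally show ?thesis
      by simp
  qed
  ultimately show ?thesis
    using M by (simp add: max_matching_def)
qed

end

lemma tree_forest: "tree V E \<Longrightarrow> forest V E"
  by (simp add: forest_def tree_def)

section \<open>The class \<open>\<T>\<close>\<close>

text \<open>Double counting: the degree sum over a cover \<open>A\<close> counts every edge at least once, so if it
  is at most \<open>3 |A| = |E|\<close>, all degrees are 3 and every edge has just one endpoint in \<open>A\<close>.\<close>

lemma tight_degree_cover:
  assumes g: "graph V E" and fin: "finite A" and cover: "vertex_cover E A"
    and deg: "\<And>a. a \<in> A \<Longrightarrow> deg E a \<le> 3" and card_E: "card E = 3 * card A"
  shows "\<And>a. a \<in> A \<Longrightarrow> deg E a = 3" and "\<And>e. e \<in> E \<Longrightarrow> \<exists>a\<in>A. \<exists>b\<in>V - A. e = {a, b}"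
proof -
  have sums: "(\<Sum>a\<in>A. deg E a) = (\<Sum>e\<in>E. card (e \<inter> A))"
    by (rule sum_deg_eq_sum_card_Int[OF g fin])
  have deg_sum_le: "(\<Sum>a\<in>A. deg E a) \<le> (\<Sum>a\<in>A. 3)"
    using deg by (intro sum_mono) auto
  have one_le: "1 \<le> card (e \<inter> A)" if "e \<in> E" for e
    using cover that fin by (auto simp: vertex_cover_def Suc_le_eq card_gt_0_iff)
  then have "(\<Sum>e\<in>E. 1) \<le> (\<Sum>e\<in>E. card (e \<inter> A))"
    by (intro sum_mono) auto
  with sums deg_sum_le card_E have sums_eq: "(\<Sum>e\<in>E. 1) = (\<Sum>e\<in>E. card (e \<inter> A))"
    and deg_sum_eq: "(\<Sum>a\<in>A. deg E a) = (\<Sum>a\<in>A. 3)"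
    by simp_all
  show "deg E a = 3" if "a \<in> A" for a
    using sum_mono_inv[OF deg_sum_eq _ that fin] deg by blast
  show "\<exists>a\<in>A. \<exists>b\<in>V - A. e = {a, b}" if "e \<in> E" for e
  proof -
    obtain u v where e: "e = {u, v}" "u \<noteq> v" "u \<in> V" "v \<in> V"
      using graph_edgeE[OF g \<open>e \<in> E\<close>] by blast
    have "card (e \<inter> A) = 1"
      by (rule sym, rule sum_mono_inv[OF sums_eq one_le that graph_finite_edges[OF g]])
    then obtain a where a: "e \<inter> A = {a}"
      by (rule card_1_singletonE)
    define b where "b = (if a = u then v else u)"
    have "e = {a, b}" and "b \<in> V" and "b \<noteq> a"
      using a e unfolding b_def by auto
    moreover have "b \<notin> A"
      using a \<open>e = {a, b}\<close> \<open>b \<noteq> a\<close> by blast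
    ultimately show ?thesis
      using a by blast
  qed
qed

context forest
begin

lemma card_edges_meeting_A: "card {e \<in> E. e \<inter> A \<noteq> {}} \<le> (\<Sum>a\<in>A. deg E a)"
proof -
  have "{e \<in> E. e \<inter> A \<noteq> {}} = (\<Union>a\<in>A. {e \<in> E. a \<in> e})"
    by blast
  then show ?thesis
    using card_UN_le[OF finite_A, of "\<lambda>a. {e \<in> E. a \<in> e}"] card_incident_edges[OF graph]
    by simp
qed

text \<open>The counting argument behind the class \<open>\<T>\<close>: edges meeting \<open>A\<close> number at most \<open>3 |A|\<close>,
  and the forest on the perfectly matchable set \<open>C\<close> has fewer than \<open>|C| = 2 \<nu>(C_edges)\<close> edges,
  so \<open>|E| = 3 \<nu>(E)\<close> forces \<open>C = {}\<close>.\<close>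

lemma C_empty_if_extremal:
  assumes deg: "\<forall>a\<in>A. deg E a \<le> 3" and tree: "tree V E" and card_V: "card V = 3 * nu E + 1"
  shows "C = {}"
proof (rule ccontr)
  assume "C \<noteq> {}"
  obtain K where K: "minimum_cover E K"
    using minimum_cover_exists by blast
  have "E = {e \<in> E. e \<inter> A \<noteq> {}} \<union> C_edges"
    using edge_avoiding_A_within_C by (auto simp: C_edges_def)
  then have "card E = card ({e \<in> E. e \<inter> A \<noteq> {}} \<union> C_edges)"
    by (rule arg_cong)
  also have "\<dots> \<le> card {e \<in> E. e \<inter> A \<noteq> {}} + card C_edges"
    by (rule card_Un_le)
  finally have "card E \<le> card {e \<in> E. e \<inter> A \<noteq> {}} + card C_edges" .
  moreover have "card {e \<in> E. e \<inter> A \<noteq> {}} \<le> 3 * card A"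
    using card_edges_meeting_A sum_bounded_above[of A "deg E" 3] deg by simp
  moreover have "card C_edges + 1 \<le> card C"
    using card_edges_forest[OF C_edges_forest \<open>C \<noteq> {}\<close>] .
  moreover have "card C = 2 * card (K \<inter> C)"
    using card_C minimum_cover_restrict(1)[OF K] by (simp add: minimum_cover_def)
  moreover have "nu E = card A + card (K \<inter> C)"
    using minimum_cover_restrict(2)[OF K] K by (simp add: minimum_cover_def)
  moreover have "card E + 1 = card V"
    using card_edges_tree[OF tree] .
  ultimately show False
    using card_V by linarith
qed

end

locale cubic_bipartite_tree = forest +
  fixes X Y :: "'a set"
  assumes connected: "connected_graph V E"
    and sides_disjoint: "X \<inter> Y = {}" and sides_cover: "X \<union> Y = V"
    and edge_between_sides: "e \<in> E \<Longrightarrow> \<exists>x\<in>X. \<exists>y\<in>Y. e = {x, y}"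
    and deg_X: "x \<in> X \<Longrightarrow> deg E x = 3"

lemma (in forest) extremal_cubic_bipartite:
  assumes deg: "\<forall>a\<in>A. deg E a \<le> 3" and tree: "tree V E" and card_V: "card V = 3 * nu E + 1"
  shows "cubic_bipartite_tree V E A D"
proof -
  have "C = {}"
    by (rule C_empty_if_extremal[OF assms])
  then have V: "V = A \<union> D"
    using vertices_partition(1) by simp
  obtain K where K: "minimum_cover E K" "K \<subseteq> V"
    using minimum_cover_exists by blast
  have "K \<inter> D = {}"
    using K(1) D_iff by blast
  then have "K = A"
    using A_subset_minimum_cover[OF K(1)] K(2) V by blast
  with K(1) have cover: "vertex_cover E A" and nu: "nu E = card A"
    by (auto simp: minimum_cover_def)
  have "card E = 3 * card A"
    using card_edges_tree[OF tree] card_V nu by simp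
  note tight = tight_degree_cover[OF graph finite_A cover _ this]
  have "V - A = D"
    using V A_D_disjoint by blast
  with tight deg show ?thesis
    by (intro cubic_bipartite_tree.intro cubic_bipartite_tree_axioms.intro forest_axioms)
      (use tree V A_D_disjoint in \<open>auto simp: tree_def\<close>)
qed

lemma class_T_imp_cubic_bipartite_tree:
  assumes "class_T V E"
  shows "cubic_bipartite_tree V E (A_set V E) (D_set V E)"
proof -
  have tree: "tree V E" and deg: "\<forall>a\<in>A_set V E. deg E a \<le> 3"
    and "real (nu E) = (real (card V) - 1) / 3"
    using assms by (auto simp: class_T_def)
  then have "real (card V) = real (3 * nu E + 1)"
    by (simp add: field_simps)
  then have "card V = 3 * nu E + 1"
    by (simp only: of_nat_eq_iff)
  interpret forest V E
    by (rule tree_forest[OF tree])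
  show ?thesis
    using extremal_cubic_bipartite tree deg \<open>card V = 3 * nu E + 1\<close> by blast
qed

context cubic_bipartite_tree
begin

lemma tree: "tree V E"
  using graph connected cycle_free by (simp add: tree_def)

lemma finite_X: "finite X"
  using sides_cover finite_vertices finite_subset by blast

lemma edge_side_X: "{u, v} \<in> E \<Longrightarrow> v \<in> X \<Longrightarrow> u \<in> Y"
  using edge_between_sides sides_disjoint by (fastforce simp: doubleton_eq_iff)

lemma edge_side_Y: "{u, v} \<in> E \<Longrightarrow> v \<in> Y \<Longrightarrow> u \<in> X"
  using edge_between_sides sides_disjoint by (fastforce simp: doubleton_eq_iff)

lemma card_edges_meeting:
  assumes "Z \<subseteq> X"
  shows "card {e \<in> E. e \<inter> Z \<noteq> {}} = 3 * card Z"
proof -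
  have "{e \<in> E. e \<inter> Z \<noteq> {}} = (\<Union>z\<in>Z. {e \<in> E. z \<in> e})"
    by blast
  moreover have "{e \<in> E. z \<in> e} \<inter> {e \<in> E. z' \<in> e} = {}" if "z \<in> Z" "z' \<in> Z" "z \<noteq> z'" for z z'
  proof (rule ccontr)
    assume "{e \<in> E. z \<in> e} \<inter> {e \<in> E. z' \<in> e} \<noteq> {}"
    then obtain e where "e \<in> E" "z \<in> e" "z' \<in> e"
      by blast
    then have "{z', z} \<in> E"
      using graph_edge_eq[OF graph, of e z' z] that(3) by auto
    then show False
      using edge_side_X that assms sides_disjoint by blast
  qed
  moreover have "card (\<Union>z\<in>Z. {e \<in> E. z \<in> e}) = (\<Sum>z\<in>Z. card {e \<in> E. z \<in> e})"
    by (intro card_UN_disjoint ballI impI calculation(2))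
      (use assms finite_X finite_subset finite_edges in auto)
  ultimately have "card {e \<in> E. e \<inter> Z \<noteq> {}} = (\<Sum>z\<in>Z. card {e \<in> E. z \<in> e})"
    by simp
  also have "\<dots> = (\<Sum>z\<in>Z. 3)"
    using assms deg_X card_incident_edges[OF graph] by (intro sum.cong) auto
  finally show ?thesis
    by simp
qed

text \<open>The \<open>3 |Z|\<close> edges at \<open>Z\<close> form a forest on \<open>Z\<close> and its neighbourhood.\<close>

lemma card_nbrs_of_subset:
  assumes "Z \<subseteq> X" and "Z \<noteq> {}"
  shows "2 * card Z + 1 \<le> card (\<Union>z\<in>Z. nbrs E z)"
proof -
  let ?N = "\<Union>z\<in>Z. nbrs E z" and ?F = "{e \<in> E. e \<inter> Z \<noteq> {}}"
  have "?N \<subseteq> V"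
    using nbrs_subset_vertices[OF graph] by blast
  then have fin: "finite (Z \<union> ?N)"
    using assms(1) finite_X finite_vertices finite_subset by blast
  have "graph (Z \<union> ?N) ?F"
    unfolding graph_def
  proof (intro conjI ballI fin)
    fix e
    assume e: "e \<in> ?F"
    then obtain x y where xy: "x \<in> X" "y \<in> Y" "e = {x, y}"
      using edge_between_sides by blast
    with e assms(1) sides_disjoint have "x \<in> Z"
      by blast
    moreover from xy e have "y \<in> nbrs E x"
      by (simp add: insert_commute)
    ultimately show "\<exists>u v. e = {u, v} \<and> u \<noteq> v \<and> u \<in> Z \<union> ?N \<and> v \<in> Z \<union> ?N"
      using xy sides_disjoint by blast
  qed
  moreover have "cycle_free ?F"
    by (rule cycle_free_subset[OF cycle_free]) auto
  ultimately have "card ?F + 1 \<le> card (Z \<union> ?N)"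
    using card_edges_forest assms(2) by blast
  also have "\<dots> \<le> card Z + card ?N"
    by (rule card_Un_le)
  finally show ?thesis
    using card_edges_meeting[OF assms(1)] by simp
qed

lemma card_le_cover:
  assumes cover: "vertex_cover E K" and "finite K"
  shows "card X + card (X - K) \<le> card K"
proof (cases "X - K = {}")
  case True
  then have "X \<subseteq> K" and "card (X - K) = 0"
    by (blast, simp only: True card.empty)
  then show ?thesis
    using card_mono[OF \<open>finite K\<close>] by simp
next
  case False
  let ?N = "\<Union>x\<in>X - K. nbrs E x"
  have N: "?N \<subseteq> K \<inter> Y"
  proof
    fix y
    assume "y \<in> ?N"
    then obtain x where "x \<in> X - K" and xy: "{y, x} \<in> E"
      by auto
    moreover have "{y, x} \<inter> K \<noteq> {}"
      using cover xy unfolding vertex_cover_def by blast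
    ultimately show "y \<in> K \<inter> Y"
      using edge_side_X by blast
  qed
  have "card (X \<inter> K) + card ?N = card ((X \<inter> K) \<union> ?N)"
    using N sides_disjoint finite_X \<open>finite K\<close> finite_subset[of ?N K]
    by (intro card_Un_disjoint[symmetric]) auto
  also have "\<dots> \<le> card K"
    using N \<open>finite K\<close> by (intro card_mono) auto
  finally have "card (X \<inter> K) + card ?N \<le> card K" .
  moreover have "2 * card (X - K) + 1 \<le> card ?N"
    by (rule card_nbrs_of_subset[OF _ False]) auto
  moreover have "card X = card (X \<inter> K) + card (X - K)"
    by (rule card_Int_Diff[OF finite_X])
  ultimately show ?thesis
    by linarith
qed

lemma X_cover: "vertex_cover E X"
  using edge_between_sides by (fastforce simp: vertex_cover_def)

lemma nu_eq: "nu E = card X"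
proof -
  obtain K where "minimum_cover E K"
    using minimum_cover_exists by blast
  then have "card X \<le> nu E"
    using card_le_cover by (fastforce simp: minimum_cover_def)
  moreover have "nu E \<le> card X"
    by (rule nu_le_card_cover[OF finite_edges X_cover finite_X])
  ultimately show ?thesis
    by simp
qed

lemma minimum_cover_iff: "minimum_cover E K \<longleftrightarrow> K = X"
proof
  assume K: "minimum_cover E K"
  then have "card (X - K) = 0"
    using card_le_cover nu_eq by (fastforce simp: minimum_cover_def)
  then have "X \<subseteq> K"
    using finite_X by simp
  moreover have "finite K" and "card X = card K"
    using K nu_eq by (auto simp: minimum_cover_def)
  ultimately show "K = X"
    using card_subset_eq[of K X] by simp
qed (simp add: minimum_cover_def X_cover finite_X nu_eq)

lemma D_set_eq: "D_set V E = Y"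
  using D_iff minimum_cover_iff sides_disjoint sides_cover by blast

lemma A_set_eq: "A_set V E = X"
proof (intro equalityI subsetI)
  fix x
  assume "x \<in> A_set V E"
  then obtain y where "y \<in> Y" "{x, y} \<in> E"
    unfolding A_set_def D_set_eq by auto
  then show "x \<in> X"
    by (rule edge_side_Y[rotated])
next
  fix x
  assume x: "x \<in> X"
  then have "nbrs E x \<noteq> {}"
    using deg_X by (fastforce simp: deg_def)
  then obtain y where yx: "{y, x} \<in> E"
    by auto
  have "y \<in> Y"
    by (rule edge_side_X[OF yx x])
  moreover have "x \<in> nbrs E y"
    using yx by (simp add: insert_commute)
  ultimately show "x \<in> A_set V E"
    using x sides_disjoint
    unfolding A_set_def D_set_eq by blast
qed

lemma class_T: "class_T V E"
proof -
  have "{e \<in> E. e \<inter> X \<noteq> {}} = E"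
    using X_cover by (auto simp: vertex_cover_def)
  then have "card E = 3 * card X"
    using card_edges_meeting[of X] by simp
  then have "card V = 3 * card X + 1"
    using card_edges_tree[OF tree] by simp
  then show ?thesis
    unfolding class_T_def using tree deg_X A_set_eq nu_eq by simp
qed

end

section \<open>Contracting a subtree\<close>

locale tree_contraction = forest +
  fixes S :: "'a set" and w :: 'a
  assumes connected: "connected_graph V E"
    and S_subset: "S \<subseteq> V" and S_nonempty: "S \<noteq> {}" and w_notin: "w \<notin> V"
    and S_spans: "card S \<le> card {e \<in> E. e \<subseteq> S} + 1"
begin

abbreviation V' where "V' \<equiv> contract_V V S w"
abbreviation E' where "E' \<equiv> contract_E V E S w"

definition outer_edges where "outer_edges = {e \<in> E. e \<inter> S = {}}"
definition crossing_edges where "crossing_edges = {e \<in> E. e \<inter> S \<noteq> {} \<and> \<not> e \<subseteq> S}"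
definition new_edges where "new_edges = {{w, x} | x. x \<in> V - S \<and> (\<exists>y\<in>S. {x, y} \<in> E)}"

lemma contract_E_eq: "E' = outer_edges \<union> new_edges"
  unfolding contract_E_def outer_edges_def new_edges_def ..

lemma new_edges_image: "new_edges = (\<lambda>e. insert w (e - S)) ` crossing_edges"
proof (intro equalityI subsetI)
  fix e
  assume "e \<in> new_edges"
  then obtain x y where xy: "e = {w, x}" "x \<in> V - S" "y \<in> S" "{x, y} \<in> E"
    unfolding new_edges_def by blast
  then have "{x, y} \<in> crossing_edges" and "e = insert w ({x, y} - S)"
    unfolding crossing_edges_def by auto
  then show "e \<in> (\<lambda>e. insert w (e - S)) ` crossing_edges"
    by blast
next
  fix e
  assume "e \<in> (\<lambda>e. insert w (e - S)) ` crossing_edges"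
  then obtain c where c: "c \<in> crossing_edges" "e = insert w (c - S)"
    by blast
  then have "c \<in> E" and "c \<inter> S \<noteq> {}" and "\<not> c \<subseteq> S"
    unfolding crossing_edges_def by auto
  moreover obtain p q where pq: "c = {p, q}" "p \<in> V" "q \<in> V"
    using graph_edgeE[OF graph \<open>c \<in> E\<close>] by blast
  ultimately consider "p \<in> S" "q \<notin> S" | "p \<notin> S" "q \<in> S"
    by blast
  then show "e \<in> new_edges"
  proof cases
    case 1
    moreover have "{q, p} \<in> E"
      using \<open>c \<in> E\<close> pq(1) by (simp add: insert_commute)
    moreover have "e = {w, q}"
      using c(2) pq(1) 1 by auto
    ultimately show ?thesis
      using pq(3) unfolding new_edges_def by blast
  next
    case 2
    moreover have "e = {w, p}"
      using c(2) pq(1) 2 by auto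
    ultimately show ?thesis
      using pq \<open>c \<in> E\<close> unfolding new_edges_def by blast
  qed
qed

lemma contract_graph: "graph V' E'"
  unfolding graph_def contract_E_eq
proof (intro conjI ballI)
  show "finite V'"
    using finite_vertices by (simp add: contract_V_def)
  fix e
  assume "e \<in> outer_edges \<union> new_edges"
  then show "\<exists>u v. e = {u, v} \<and> u \<noteq> v \<and> u \<in> V' \<and> v \<in> V'"
  proof
    assume "e \<in> outer_edges"
    then show ?thesis
      unfolding outer_edges_def contract_V_def by (auto elim!: graph_edgeE[OF graph])
  next
    assume "e \<in> new_edges"
    then show ?thesis
      using w_notin unfolding new_edges_def contract_V_def by auto
  qed
qed

definition collapse :: "'a \<Rightarrow> 'a" where
  "collapse x = (if x \<in> S then w else x)"

lemma collapse_edge: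
  assumes pq: "{p, q} \<in> E"
  shows "(adj E')\<^sup>*\<^sup>* (collapse p) (collapse q)"
proof -
  have new: "{w, x} \<in> E'" if "x \<in> V - S" and "y \<in> S" and "{x, y} \<in> E" for x y
    using that unfolding contract_E_eq new_edges_def by blast
  have "p \<in> V" "q \<in> V"
    using graph_edgeD[OF graph pq] by auto
  consider "p \<in> S" "q \<in> S" | "p \<in> S" "q \<notin> S" | "p \<notin> S" "q \<in> S" | "p \<notin> S" "q \<notin> S"
    by blast
  then show ?thesis
  proof cases
    case 2
    then have "adj E' w q"
      using new[of q p] pq \<open>q \<in> V\<close> by (simp add: insert_commute)
    with 2 show ?thesis
      unfolding collapse_def by auto
  next
    case 3
    then have "adj E' p w"
      using new[of p q] pq \<open>p \<in> V\<close> by (simp add: insert_commute)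
    with 3 show ?thesis
      unfolding collapse_def by auto
  next
    case 4
    then have "adj E' p q"
      using pq unfolding contract_E_eq outer_edges_def by blast
    with 4 show ?thesis
      unfolding collapse_def by auto
  qed (simp add: collapse_def)
qed

lemma collapse_onto: "V' = collapse ` V"
proof (intro equalityI subsetI)
  fix a
  assume a: "a \<in> V'"
  show "a \<in> collapse ` V"
  proof (cases "a = w")
    case True
    obtain s where "s \<in> S"
      using S_nonempty by blast
    with True S_subset show ?thesis
      unfolding collapse_def by (intro image_eqI[of _ _ s]) auto
  next
    case False
    with a show ?thesis
      unfolding contract_V_def collapse_def by (intro image_eqI[of _ _ a]) auto
  qed
qed (auto simp: contract_V_def collapse_def)

lemma contract_connected: "connected_graph V' E'"
  unfolding connected_graph_def
proof (intro conjI ballI)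
  show "V' \<noteq> {}"
    by (simp add: contract_V_def)
  fix a b
  assume "a \<in> V'" and "b \<in> V'"
  then obtain a0 b0 where "a0 \<in> V" "b0 \<in> V" and ab: "a = collapse a0" "b = collapse b0"
    unfolding collapse_onto by blast
  then have "(adj E)\<^sup>*\<^sup>* a0 b0"
    using connected unfolding connected_graph_def by blast
  then have "(adj E')\<^sup>*\<^sup>* (collapse a0) (collapse b0)"
    by (rule rtranclp_adj_map[OF _ collapse_edge])
  with ab show "(adj E')\<^sup>*\<^sup>* a b"
    by simp
qed

lemma card_edge_classes: "card outer_edges + card crossing_edges + card {e \<in> E. e \<subseteq> S} \<le> card E"
proof -
  let ?inner = "{e \<in> E. e \<subseteq> S}"
  have nonempty: "e \<noteq> {}" if "e \<in> E" for e
    using graph_edge_card[OF graph that] by auto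
  have "card outer_edges + card crossing_edges = card (outer_edges \<union> crossing_edges)"
    using finite_edges unfolding outer_edges_def crossing_edges_def
    by (intro card_Un_disjoint[symmetric]) auto
  moreover have "card (outer_edges \<union> crossing_edges) + card ?inner
      = card (outer_edges \<union> crossing_edges \<union> ?inner)"
    using finite_edges nonempty unfolding outer_edges_def crossing_edges_def
    by (intro card_Un_disjoint[symmetric]) auto
  moreover have "card (outer_edges \<union> crossing_edges \<union> ?inner) \<le> card E"
    using finite_edges unfolding outer_edges_def crossing_edges_def by (intro card_mono) auto
  ultimately show ?thesis
    by simp
qed

text \<open>Counting edges against vertices: contracting \<open>S\<close> loses at least \<open>|S| - 1\<close> edges and exactly
  \<open>|S| - 1\<close> vertices, while the contraction is connected; so no edges are lost beyond those
  inside \<open>S\<close>, which makes the contraction a tree and no two crossing edges merge.\<close>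

lemma contract_counts: "card E' + 1 = card V'" "card new_edges = card crossing_edges"
proof -
  have fin_cross: "finite crossing_edges"
    using finite_edges by (simp add: crossing_edges_def)
  have "card new_edges \<le> card crossing_edges"
    unfolding new_edges_image using card_image_le[OF fin_cross] .
  moreover have "card E' = card outer_edges + card new_edges"
  proof -
    have "outer_edges \<inter> new_edges = {}"
      using w_notin graph_edge_subset[OF graph] by (auto simp: outer_edges_def new_edges_def)
    moreover have "finite new_edges"
      unfolding new_edges_image using fin_cross by simp
    ultimately show ?thesis
      unfolding contract_E_eq using finite_edges
      by (intro card_Un_disjoint) (auto simp: outer_edges_def)
  qed
  moreover have "card V' + card S = card V + 1"
  proof -
    have "card (V - S) + card S = card V"
      using card_Diff_subset[OF finite_subset[OF S_subset finite_vertices] S_subset]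
        card_mono[OF finite_vertices S_subset] by simp
    then show ?thesis
      using finite_vertices w_notin by (simp add: contract_V_def)
  qed
  moreover have "card V' \<le> card E' + 1"
    by (rule card_vertices_connected[OF contract_graph contract_connected])
  moreover have "card E + 1 = card V"
    using card_edges_tree[of V E] graph connected cycle_free by (simp add: tree_def)
  ultimately show "card E' + 1 = card V'" and "card new_edges = card crossing_edges"
    using card_edge_classes S_spans by linarith+
qed

lemma contract_tree: "tree V' E'"
  unfolding tree_def
  using contract_graph contract_connected
    connected_cycle_free_if_card[OF contract_graph contract_connected] contract_counts(1)
  by simp

lemma unique_nbr_in_S:
  assumes "x \<notin> S" and "y \<in> S" and "y' \<in> S" and "{x, y} \<in> E" and "{x, y'} \<in> E"
  shows "y = y'"
proof -
  have inj: "inj_on (\<lambda>e. insert w (e - S)) crossing_edges"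
    using contract_counts(2) finite_edges
    by (intro eq_card_imp_inj_on) (simp_all add: crossing_edges_def new_edges_image)
  have "{x, y} \<in> crossing_edges" and "{x, y'} \<in> crossing_edges"
    using assms unfolding crossing_edges_def by auto
  moreover have "insert w ({x, y} - S) = insert w ({x, y'} - S)"
    using assms by auto
  ultimately have "{x, y} = {x, y'}"
    using inj_onD[OF inj] by metis
  then show ?thesis
    by (auto simp: doubleton_eq_iff)
qed

lemma nbrs_contract:
  assumes "x \<in> V - S"
  shows "nbrs E' x = (nbrs E x - S) \<union> (if \<exists>y\<in>S. {x, y} \<in> E then {w} else {})"
proof -
  have "x \<noteq> w"
    using assms w_notin by blast
  then show ?thesis
    using assms unfolding contract_E_eq outer_edges_def new_edges_def nbrs_def
    by (auto simp: doubleton_eq_iff insert_commute)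
qed

lemma deg_contract:
  assumes x: "x \<in> V - S"
  shows "deg E' x = deg E x"
proof (cases "\<exists>y\<in>S. {x, y} \<in> E")
  case True
  then obtain y where y: "y \<in> S" "{x, y} \<in> E"
    by blast
  have "nbrs E x \<inter> S = {y}"
    using y unique_nbr_in_S[of x] x by (auto simp: insert_commute)
  moreover have "w \<notin> nbrs E x"
    using w_notin graph_edgeD(2)[OF graph] by auto
  moreover have "card (nbrs E x) = card (nbrs E x - S) + card (nbrs E x \<inter> S)"
    using card_Int_Diff[OF finite_nbrs[OF graph], where B = S] by simp
  ultimately show ?thesis
    using True finite_nbrs[OF graph, of x] unfolding deg_def nbrs_contract[OF x] by simp
next
  case False
  then have "nbrs E x - S = nbrs E x"
    by (auto simp: insert_commute)
  with False show ?thesis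
    unfolding deg_def nbrs_contract[OF x] by simp
qed

end

section \<open>Two stars sharing a leaf\<close>

locale double_star_contraction = cubic_bipartite_tree +
  fixes v1 v2 u1 u2 u3 u4 u5 w :: 'a and S :: "'a set"
  assumes v1: "v1 \<in> X" and v2: "v2 \<in> X" and v12: "v1 \<noteq> v2"
    and nbrs_v1: "nbrs E v1 = {u1, u2, u5}" and nbrs_v2: "nbrs E v2 = {u3, u4, u5}"
    and leaves_distinct: "distinct [u1, u2, u3, u4, u5]" and w_notin: "w \<notin> V"
    and S_def: "S = {v1, v2} \<union> nbrs E v1 \<union> nbrs E v2"
begin

lemma star_edges:
  "{u1, v1} \<in> E" "{u2, v1} \<in> E" "{u5, v1} \<in> E" "{u3, v2} \<in> E" "{u4, v2} \<in> E" "{u5, v2} \<in> E"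
  using nbrs_v1 nbrs_v2 by (auto simp: nbrs_def)

lemma leaves_in_Y: "{u1, u2, u3, u4, u5} \<subseteq> Y"
  using star_edges edge_side_X v1 v2 by blast

lemma S_eq: "S = {v1, v2, u1, u2, u3, u4, u5}"
  using S_def nbrs_v1 nbrs_v2 by auto

lemma S_inter_X: "S \<inter> X = {v1, v2}"
  using S_eq leaves_in_Y v1 v2 sides_disjoint by auto

lemma inner_edges: "card S \<le> card {e \<in> E. e \<subseteq> S} + 1"
proof -
  have "v1 \<notin> {u1, u2, u3, u4, u5}" and "v2 \<notin> {u1, u2, u3, u4, u5}"
    using leaves_in_Y v1 v2 sides_disjoint by blast+
  then have "card S = 7" and "card {{u1, v1}, {u2, v1}, {u5, v1}, {u3, v2}, {u4, v2}, {u5, v2}} = 6"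
    using S_eq v12 leaves_distinct by (simp_all add: doubleton_eq_iff)
  moreover have "{{u1, v1}, {u2, v1}, {u5, v1}, {u3, v2}, {u4, v2}, {u5, v2}} \<subseteq> {e \<in> E. e \<subseteq> S}"
    using star_edges S_eq by auto
  then have "card {{u1, v1}, {u2, v1}, {u5, v1}, {u3, v2}, {u4, v2}, {u5, v2}} \<le> card {e \<in> E. e \<subseteq> S}"
    using finite_edges by (intro card_mono) auto
  ultimately show ?thesis
    by simp
qed

sublocale contraction: tree_contraction V E S w
proof (intro tree_contraction.intro tree_contraction_axioms.intro forest_axioms connected w_notin
    inner_edges)
  show "S \<subseteq> V"
    using S_eq leaves_in_Y v1 v2 sides_cover by auto
  show "S \<noteq> {}"
    using S_eq by simp
qed

lemma crossing_edge_side: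
  assumes "x \<notin> S" and "y \<in> S" and xy: "{x, y} \<in> E"
  shows "x \<in> X"
proof -
  have "y \<noteq> v" if "v \<in> {v1, v2}" for v
  proof
    assume "y = v"
    with xy have "x \<in> nbrs E v"
      by simp
    with that S_def \<open>x \<notin> S\<close> show False
      by blast
  qed
  then have "y \<in> Y"
    using \<open>y \<in> S\<close> S_eq leaves_in_Y by auto
  then show ?thesis
    by (rule edge_side_Y[OF xy])
qed

lemma contraction_cubic_bipartite:
  "cubic_bipartite_tree (contract_V V S w) (contract_E V E S w) (X - S) (Y - S \<union> {w})"
proof (intro cubic_bipartite_tree.intro cubic_bipartite_tree_axioms.intro)
  show "forest (contract_V V S w) (contract_E V E S w)"
    by (rule tree_forest[OF contraction.contract_tree])
  show "connected_graph (contract_V V S w) (contract_E V E S w)"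
    using contraction.contract_tree by (simp add: tree_def)
  show "(X - S) \<inter> (Y - S \<union> {w}) = {}" and "X - S \<union> (Y - S \<union> {w}) = contract_V V S w"
    using sides_disjoint sides_cover w_notin by (auto simp: contract_V_def)
next
  fix x
  assume "x \<in> X - S"
  then show "deg (contract_E V E S w) x = 3"
    using contraction.deg_contract deg_X sides_cover by auto
next
  fix e
  assume "e \<in> contract_E V E S w"
  then consider "e \<in> contraction.outer_edges" | "e \<in> contraction.new_edges"
    unfolding contraction.contract_E_eq by blast
  then show "\<exists>x\<in>X - S. \<exists>y\<in>Y - S \<union> {w}. e = {x, y}"
  proof cases
    case 1
    then have "e \<in> E" and "e \<inter> S = {}"
      by (auto simp: contraction.outer_edges_def)
    then show ?thesis
      using edge_between_sides by blast
  next
    case 2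
    then obtain x y where "e = {w, x}" "x \<in> V - S" "y \<in> S" "{x, y} \<in> E"
      by (auto simp: contraction.new_edges_def)
    then show ?thesis
      using crossing_edge_side by (auto simp: insert_commute)
  qed
qed

end

theorem lemma4:
  fixes V :: "'a set" and E :: "'a set set"
    and v1 v2 u1 u2 u3 u4 u5 w :: 'a
  assumes "class_T V E"
    and "v1 \<in> A_set V E" and "v2 \<in> A_set V E" and "v1 \<noteq> v2"
    and "nbrs E v1 = {u1, u2, u5}" and "nbrs E v2 = {u3, u4, u5}"
    and "distinct [u1, u2, u3, u4, u5]"
    and "w \<notin> V"
    and "S = {v1, v2} \<union> nbrs E v1 \<union> nbrs E v2"
  shows "class_T (contract_V V S w) (contract_E V E S w)
       \<and> D_set (contract_V V S w) (contract_E V E S w)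
           = {w} \<union> (D_set V E - (nbrs E v1 \<union> nbrs E v2))
       \<and> A_set (contract_V V S w) (contract_E V E S w) = A_set V E - {v1, v2}"
proof -
  interpret double_star_contraction V E "A_set V E" "D_set V E" v1 v2 u1 u2 u3 u4 u5 w S
    by (intro double_star_contraction.intro double_star_contraction_axioms.intro
        class_T_imp_cubic_bipartite_tree assms)
  interpret contracted: cubic_bipartite_tree "contract_V V S w" "contract_E V E S w"
    "A_set V E - S" "D_set V E - S \<union> {w}"
    by (rule contraction_cubic_bipartite)
  have "A_set V E - S = A_set V E - {v1, v2}"
    using S_inter_X by blast
  moreover have "D_set V E - S \<union> {w} = {w} \<union> (D_set V E - (nbrs E v1 \<union> nbrs E v2))"
    using S_def v1 v2 sides_disjoint by blast
  ultimately show ?thesis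
    using contracted.class_T contracted.D_set_eq contracted.A_set_eq by simp
qed

end
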